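(* Let $T$ be a triangulation of the oriented 2-sphere (a simplicial complex) with $N+3$ vertices, and $\mathcal E_0$ a set of $2N$ edges whose complement $\bar{\mathcal E}_0$ is a cycle-rooted spanning tree with odd cycle. Order the edges with those of $\mathcal E_0$ first, write the vertex–edge incidence matrix as $R=(R_0\,|\,\tilde R_0)$ with $R_0$ the $(N+3)\times 2N$ block on $\mathcal E_0$ and $\tilde R_0$ the invertible $(N+3)\times(N+3)$ block on $\bar{\mathcal E}_0$, and set $M_0=\begin{pmatrix}\mathrm{Id}_{2N}\\-\tilde R_0^{-1}R_0\end{pmatrix}$ and $E_0=(E_{e,e'})_{e,e'\in\mathcal E_0}$. Then $E=M_0\,E_0\,M_0^T$.
   Context: $R_{v,e}=1$ if $v$ is an endpoint of $e$, else $0$. $E_{e,e'}$: if $e\neq e'$ lie in a common face whose edges in positive cyclic order are $\{a,b\},\{b,c\},\{c,a\}$, then $E_{e,e'}=-1$ if $e'$ immediately follows $e$ and $+1$ if $e'$ immediately precedes $e$; otherwise $E_{e,e'}=0$. A cycle-rooted spanning tree is a connected spanning subgraph with as many edges as vertices. *)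

theory Defs
  imports "HOL-Analysis.Analysis"
begin

(* V : vertex set; F : set of positively oriented faces, each face (a,b,c)
   listed together with its cyclic rotations (b,c,a), (c,a,b).
   The positive cyclic order of the edges of (a,b,c) is {a,b},{b,c},{c,a}. *)

definition tri_edges :: "('v \<times> 'v \<times> 'v) set \<Rightarrow> 'v set set" where
  "tri_edges F = {{a, b} | a b c. (a, b, c) \<in> F}"

definition oriented_sphere_triangulation :: "'v set \<Rightarrow> ('v \<times> 'v \<times> 'v) set \<Rightarrow> bool" where
  "oriented_sphere_triangulation V F \<longleftrightarrow>
     finite V \<and> F \<subseteq> V \<times> V \<times> V
     \<comment> \<open>every vertex lies in a face\<close>
     \<and> V = {a. \<exists>b c. (a, b, c) \<in> F}
     \<comment> \<open>faces are nondegenerate triangles\<close>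
     \<and> (\<forall>a b c. (a, b, c) \<in> F \<longrightarrow> a \<noteq> b \<and> b \<noteq> c \<and> a \<noteq> c)
     \<comment> \<open>faces are listed up to cyclic rotation\<close>
     \<and> (\<forall>a b c. (a, b, c) \<in> F \<longrightarrow> (b, c, a) \<in> F)
     \<comment> \<open>simplicial: a vertex triple spans at most one face (one orientation)\<close>
     \<and> (\<forall>a b c. (a, b, c) \<in> F \<longrightarrow> (b, a, c) \<notin> F)
     \<comment> \<open>coherent orientation of a closed surface: every edge lies in exactly two faces,
         which induce opposite directions on it\<close>
     \<and> (\<forall>a b c c'. (a, b, c) \<in> F \<longrightarrow> (a, b, c') \<in> F \<longrightarrow> c = c')
     \<and> (\<forall>a b. (\<exists>c. (a, b, c) \<in> F) \<longleftrightarrow> (\<exists>c. (b, a, c) \<in> F))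
     \<comment> \<open>the link of every vertex is a single cycle (surface, not pseudo-surface)\<close>
     \<and> (\<forall>v\<in>V. \<forall>a a'. (\<exists>c. (v, a, c) \<in> F) \<longrightarrow> (\<exists>c. (v, a', c) \<in> F) \<longrightarrow>
           (a, a') \<in> {(x, y). (v, x, y) \<in> F}\<^sup>*)
     \<comment> \<open>connected\<close>
     \<and> (\<forall>u\<in>V. \<forall>w\<in>V. (u, w) \<in> {(x, y). \<exists>z. (x, y, z) \<in> F}\<^sup>*)
     \<comment> \<open>Euler characteristic 2 (number of faces = card F / 3)\<close>
     \<and> int (card V) - int (card (tri_edges F)) + int (card F) div 3 = 2"

definition incidence :: "'v \<Rightarrow> 'v set \<Rightarrow> real" where
  "incidence v e = (if v \<in> e then 1 else 0)"

definition Emat :: "('v \<times> 'v \<times> 'v) set \<Rightarrow> 'v set \<Rightarrow> 'v set \<Rightarrow> real" where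
  "Emat F e e' =
     (if e \<noteq> e' \<and> (\<exists>a b c. (a, b, c) \<in> F \<and> e = {a, b} \<and> e' = {b, c}) then -1
      else if e \<noteq> e' \<and> (\<exists>a b c. (a, b, c) \<in> F \<and> e' = {a, b} \<and> e = {b, c}) then 1
      else 0)"

(* cycle-rooted spanning tree: connected spanning subgraph with as many edges as vertices *)
definition crst :: "'v set \<Rightarrow> 'v set set \<Rightarrow> 'v set set \<Rightarrow> bool" where
  "crst V Edges S \<longleftrightarrow> S \<subseteq> Edges \<and> card S = card V
     \<and> (\<forall>u\<in>V. \<forall>w\<in>V. (u, w) \<in> {(x, y). {x, y} \<in> S}\<^sup>*)"

(* S contains a cycle of odd length (for a CRST this is its unique cycle) *)
definition has_odd_cycle :: "'v set \<Rightarrow> 'v set set \<Rightarrow> bool" where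
  "has_odd_cycle V S \<longleftrightarrow> (\<exists>vs. 3 \<le> length vs \<and> odd (length vs) \<and> distinct vs \<and> set vs \<subseteq> V
     \<and> (\<forall>i < length vs. {vs ! i, vs ! ((i + 1) mod length vs)} \<in> S))"

definition is_block_inverse :: "'v set \<Rightarrow> 'v set set \<Rightarrow> ('v set \<Rightarrow> 'v \<Rightarrow> real) \<Rightarrow> bool" where
  "is_block_inverse V B Rinv \<longleftrightarrow>
     (\<forall>e\<in>B. \<forall>e'\<in>B. (\<Sum>v\<in>V. Rinv e v * incidence v e') = (if e = e' then 1 else 0))
   \<and> (\<forall>v\<in>V. \<forall>w\<in>V. (\<Sum>e\<in>B. incidence v e * Rinv e w) = (if v = w then 1 else 0))"

(* M_0 = (Id ; - Rt0^{-1} R0), rows indexed by all edges, columns by E0 *)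
definition M0 :: "'v set \<Rightarrow> 'v set set \<Rightarrow> ('v set \<Rightarrow> 'v \<Rightarrow> real) \<Rightarrow> 'v set \<Rightarrow> 'v set \<Rightarrow> real" where
  "M0 V E0 Rinv e f = (if e \<in> E0 then (if e = f then 1 else 0)
                        else - (\<Sum>v\<in>V. Rinv e v * incidence v f))"

end

theory Submission
  imports Defs "Jordan_Normal_Form.Determinant"
begin

text \<open>
  Every column of \<open>E\<close> lies in the kernel of \<open>R\<close>: the column of an edge \<open>{x,y}\<close> bordered by the
  faces \<open>(x,y,c)\<close> and \<open>(y,x,c')\<close> is \<open>{y,c} + {x,c'} - {c,x} - {c',y}\<close>, and each of the four vertices
  lies on one positive and one negative of these edges; the same holds for rows.
  Writing \<open>R = (R\<^sub>0 | R\<^sub>0')\<close> for the blocks on \<open>E\<^sub>0\<close> and on its complement, a vector \<open>u\<close> with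
  \<open>R u = 0\<close> satisfies \<open>R\<^sub>0 u\<^sub>0 + R\<^sub>0' u' = 0\<close>, so \<open>u = M\<^sub>0 u\<^sub>0\<close> once \<open>R\<^sub>0'\<close> is invertible; applied to
  the columns and then to the rows of \<open>E\<close> this gives \<open>E = M\<^sub>0 E\<^sub>0 M\<^sub>0\<^sup>T\<close>.
  The square block \<open>R\<^sub>0'\<close> is invertible because a left kernel vector \<open>z\<close> satisfies \<open>z u = - z w\<close> on
  every edge of the cycle-rooted spanning tree: \<open>|z|\<close> is constant by connectivity, and \<open>z\<close> changes
  sign at each step around the odd cycle, which forces \<open>z = 0\<close>.
\<close>


lemma matrix_inverse_exists_nat:
  fixes g :: "nat \<Rightarrow> nat \<Rightarrow> real"
  assumes left_kernel: "\<And>z. \<forall>j<n. (\<Sum>i<n. z i * g i j) = 0 \<Longrightarrow> \<forall>i<n. z i = 0"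
  shows "\<exists>h. (\<forall>i<n. \<forall>j<n. (\<Sum>k<n. h i k * g k j) = (if i = j then 1 else 0))
           \<and> (\<forall>i<n. \<forall>j<n. (\<Sum>k<n. g i k * h k j) = (if i = j then 1 else 0))"
proof -
  define A where "A = mat n n (\<lambda>(i, j). g i j)"
  have A: "A \<in> carrier_mat n n" unfolding A_def by simp
  have "det (transpose_mat A) \<noteq> 0"
  proof
    assume "det (transpose_mat A) = 0"
    then obtain v where v: "v \<in> carrier_vec n" "v \<noteq> 0\<^sub>v n" "transpose_mat A *\<^sub>v v = 0\<^sub>v n"
      using det_0_iff_vec_prod_zero[of "transpose_mat A"] A by auto
    have "\<forall>j<n. (\<Sum>i<n. v $ i * g i j) = 0"
    proof (intro allI impI)
      fix j assume "j < n"
      then have "(transpose_mat A *\<^sub>v v) $ j = 0" using v(3) by simp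
      with \<open>j < n\<close> v(1) show "(\<Sum>i<n. v $ i * g i j) = 0"
        by (simp add: A_def scalar_prod_def lessThan_atLeast0 mult.commute)
    qed
    from left_kernel[OF this] have "v = 0\<^sub>v n" using v(1) by (intro eq_vecI) auto
    with v(2) show False by simp
  qed
  then have "det A \<noteq> 0" using det_transpose[OF A] by simp
  from det_non_zero_imp_unit[OF A this, of undefined]
  obtain B where B: "B \<in> carrier_mat n n" "B * A = 1\<^sub>m n" "A * B = 1\<^sub>m n"
    by (auto simp: Units_def ring_mat_def)
  show ?thesis
  proof (intro exI[of _ "\<lambda>i j. B $$ (i, j)"] conjI allI impI)
    fix i j assume ij: "i < n" "j < n"
    have "(B * A) $$ (i, j) = (if i = j then 1 else 0)" using B ij by simp
    then show "(\<Sum>k<n. B $$ (i, k) * g k j) = (if i = j then 1 else 0)"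
      using ij B by (simp add: A_def scalar_prod_def lessThan_atLeast0)
    have "(A * B) $$ (i, j) = (if i = j then 1 else 0)" using B ij by simp
    then show "(\<Sum>k<n. g i k * B $$ (k, j)) = (if i = j then 1 else 0)"
      using ij B by (simp add: A_def scalar_prod_def lessThan_atLeast0)
  qed
qed

lemma matrix_inverse_exists:
  fixes g :: "'i \<Rightarrow> 'j \<Rightarrow> real"
  assumes "finite I" "finite J" "card I = card J"
    and left_kernel: "\<And>z. \<forall>j\<in>J. (\<Sum>i\<in>I. z i * g i j) = 0 \<Longrightarrow> \<forall>i\<in>I. z i = 0"
  shows "\<exists>h. (\<forall>j\<in>J. \<forall>j'\<in>J. (\<Sum>i\<in>I. h j i * g i j') = (if j = j' then 1 else 0))
           \<and> (\<forall>i\<in>I. \<forall>i'\<in>I. (\<Sum>j\<in>J. g i j * h j i') = (if i = i' then 1 else 0))"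
proof -
  define n where "n = card I"
  obtain p where p: "bij_betw p {..<n} I"
    using ex_bij_betw_nat_finite[OF \<open>finite I\<close>] by (auto simp: n_def lessThan_atLeast0)
  obtain q where q: "bij_betw q {..<n} J"
    using ex_bij_betw_nat_finite[OF \<open>finite J\<close>] assms(3) by (auto simp: n_def lessThan_atLeast0)
  define p' where "p' = inv_into {..<n} p"
  define q' where "q' = inv_into {..<n} q"
  have p'p: "p' (p k) = k" and q'q: "q' (q k) = k" if "k < n" for k
    using that bij_betw_inv_into_left[OF p] bij_betw_inv_into_left[OF q] by (auto simp: p'_def q'_def)
  have pp': "i \<in> I \<Longrightarrow> p (p' i) = i" and qq': "j \<in> J \<Longrightarrow> q (q' j) = j" for i j
    using bij_betw_inv_into_right[OF p] bij_betw_inv_into_right[OF q] by (auto simp: p'_def q'_def)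
  have p'_lt: "i \<in> I \<Longrightarrow> p' i < n" and q'_lt: "j \<in> J \<Longrightarrow> q' j < n" for i j
    using bij_betwE[OF bij_betw_inv_into[OF p]] bij_betwE[OF bij_betw_inv_into[OF q]]
    by (auto simp: p'_def q'_def)
  have sum_I: "(\<Sum>i\<in>I. f i) = (\<Sum>k<n. f (p k))" and sum_J: "(\<Sum>j\<in>J. f' j) = (\<Sum>k<n. f' (q k))"
    for f f' using sum.reindex_bij_betw[OF p, of f] sum.reindex_bij_betw[OF q, of f'] by simp_all
  have "\<exists>h. (\<forall>i<n. \<forall>j<n. (\<Sum>k<n. h i k * g (p k) (q j)) = (if i = j then 1 else 0))
           \<and> (\<forall>i<n. \<forall>j<n. (\<Sum>k<n. g (p i) (q k) * h k j) = (if i = j then 1 else 0))"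
  proof (rule matrix_inverse_exists_nat)
    fix z assume "\<forall>j<n. (\<Sum>k<n. z k * g (p k) (q j)) = 0"
    then have "\<forall>j\<in>J. (\<Sum>i\<in>I. z (p' i) * g i j) = 0"
      by (simp add: sum_I p'p) (metis q'_lt qq')
    from left_kernel[OF this] show "\<forall>k<n. z k = 0"
      by (metis p'p bij_betwE[OF p] lessThan_iff)
  qed
  then obtain h where h1: "\<forall>i<n. \<forall>j<n. (\<Sum>k<n. h i k * g (p k) (q j)) = (if i = j then 1 else 0)"
    and h2: "\<forall>i<n. \<forall>j<n. (\<Sum>k<n. g (p i) (q k) * h k j) = (if i = j then 1 else 0)" by blast
  show ?thesis
  proof (intro exI[of _ "\<lambda>j i. h (q' j) (p' i)"] conjI ballI)
    fix j j' assume "j \<in> J" "j' \<in> J"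
    then show "(\<Sum>i\<in>I. h (q' j) (p' i) * g i j') = (if j = j' then 1 else 0)"
      using h1 q'_lt qq' by (simp add: sum_I p'p) metis
  next
    fix i i' assume "i \<in> I" "i' \<in> I"
    then show "(\<Sum>j\<in>J. g i j * h (q' j) (p' i')) = (if i = i' then 1 else 0)"
      using h2 p'_lt pp' by (simp add: sum_J q'q) metis
  qed
qed

lemma sum_incidence_doubleton:
  fixes z :: "'v \<Rightarrow> real"
  assumes "finite V" "u \<in> V" "w \<in> V" "u \<noteq> w"
  shows "(\<Sum>v\<in>V. z v * incidence v {u, w}) = z u + z w"
proof -
  have "(\<Sum>v\<in>V. z v * incidence v {u, w}) = (\<Sum>v\<in>V \<inter> {u, w}. z v)"
    using assms(1) by (simp add: incidence_def sum.inter_restrict if_distrib cong: if_cong)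
  also have "V \<inter> {u, w} = {u, w}" using assms(2,3) by blast
  finally show ?thesis using assms(4) by simp
qed

lemma alternating_on_connected_odd_cycle_graph_eq_0:
  fixes z :: "'v \<Rightarrow> real"
  assumes alternating: "\<And>u w. {u, w} \<in> S \<Longrightarrow> z u + z w = 0"
    and connected: "\<forall>u\<in>V. \<forall>w\<in>V. (u, w) \<in> {(x, y). {x, y} \<in> S}\<^sup>*"
    and "has_odd_cycle V S" and "v \<in> V"
  shows "z v = 0"
proof -
  have abs_eq: "\<bar>z w\<bar> = \<bar>z u\<bar>" if "(u, w) \<in> {(x, y). {x, y} \<in> S}\<^sup>*" for u w
    using that by (induction rule: rtrancl_induct) (auto dest!: alternating)
  obtain vs where vs: "3 \<le> length vs" "odd (length vs)" "set vs \<subseteq> V"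
    and cycle: "\<And>i. i < length vs \<Longrightarrow> {vs ! i, vs ! ((i + 1) mod length vs)} \<in> S"
    using \<open>has_odd_cycle V S\<close> unfolding has_odd_cycle_def by blast
  let ?L = "length vs"
  have sign: "z (vs ! i) = (-1) ^ i * z (vs ! 0)" if "i < ?L" for i
    using that
  proof (induction i)
    case (Suc i)
    then have "{vs ! i, vs ! Suc i} \<in> S" using cycle[of i] by simp
    then show ?case using Suc alternating by fastforce
  qed simp
  obtain m where m: "?L = Suc m" using vs(1) by (cases ?L) auto
  then have "{vs ! m, vs ! 0} \<in> S" using cycle[of m] by simp
  then have "z (vs ! m) + z (vs ! 0) = 0" by (rule alternating)
  moreover have "z (vs ! m) = z (vs ! 0)" using sign[of m] m vs(2) by simp
  ultimately have "z (vs ! 0) = 0" by simp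
  moreover have "vs ! 0 \<in> V" using vs(1,3) by (auto intro: nth_mem[THEN subsetD[rotated]])
  ultimately show ?thesis using abs_eq connected \<open>v \<in> V\<close> by fastforce
qed

lemma kernel_vector_eq_M0:
  fixes u :: "'v set \<Rightarrow> real"
  assumes "finite T" "finite V" "E0 \<subseteq> T"
    and inverse: "is_block_inverse V (T - E0) Rinv"
    and kernel: "\<forall>v\<in>V. (\<Sum>e\<in>T. incidence v e * u e) = 0"
    and "e \<in> T"
  shows "u e = (\<Sum>f\<in>E0. M0 V E0 Rinv e f * u f)"
proof (cases "e \<in> E0")
  case True
  have "(\<Sum>f\<in>E0. M0 V E0 Rinv e f * u f) = (\<Sum>f\<in>E0. if e = f then u f else 0)"
    by (rule sum.cong) (simp_all add: M0_def True)
  with True assms(1,3) show ?thesis by (simp add: finite_subset)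
next
  case False
  let ?B = "T - E0"
  have split: "(\<Sum>g\<in>?B. incidence v g * u g) = - (\<Sum>f\<in>E0. incidence v f * u f)" if "v \<in> V" for v
    using kernel that sum.subset_diff[OF assms(3,1), of "\<lambda>e. incidence v e * u e"] by simp
  have "u e = (\<Sum>g\<in>?B. if e = g then u g else 0)"
    using \<open>e \<in> T\<close> False assms(1) by simp
  also have "\<dots> = (\<Sum>g\<in>?B. (\<Sum>v\<in>V. Rinv e v * incidence v g) * u g)"
    using inverse \<open>e \<in> T\<close> False by (intro sum.cong) (auto simp: is_block_inverse_def)
  also have "\<dots> = (\<Sum>v\<in>V. Rinv e v * (\<Sum>g\<in>?B. incidence v g * u g))"
    by (simp add: sum_distrib_left sum_distrib_right mult.assoc sum.swap[of _ ?B])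
  also have "\<dots> = (\<Sum>v\<in>V. - Rinv e v * (\<Sum>f\<in>E0. incidence v f * u f))"
    by (simp add: split)
  also have "\<dots> = (\<Sum>f\<in>E0. M0 V E0 Rinv e f * u f)"
    by (simp add: M0_def False sum_distrib_left sum_distrib_right mult.assoc sum.swap[of _ E0]
        flip: sum_negf)
  finally show ?thesis .
qed

lemma sum_mult_of_bool_eq_single:
  fixes f :: "'a \<Rightarrow> 'b :: semiring_1"
  assumes "finite T" "k \<in> T"
  shows "(\<Sum>e\<in>T. f e * of_bool (e = k)) = f k"
proof -
  have "(\<Sum>e\<in>T. f e * of_bool (e = k)) = (\<Sum>e\<in>T. if e = k then f e else 0)"
    by (rule sum.cong) auto
  with assms show ?thesis by simp
qed

definition face_successor :: "('v \<times> 'v \<times> 'v) set \<Rightarrow> 'v set \<Rightarrow> 'v set \<Rightarrow> bool" where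
  "face_successor F e e' \<longleftrightarrow> (\<exists>a b c. (a, b, c) \<in> F \<and> e = {a, b} \<and> e' = {b, c})"

lemma Emat_face_successor:
  "Emat F e e' = (if e \<noteq> e' \<and> face_successor F e e' then -1
                  else if e \<noteq> e' \<and> face_successor F e' e then 1 else 0)"
  unfolding Emat_def face_successor_def by blast

locale sphere_triangulation =
  fixes V :: "'v set" and F :: "('v \<times> 'v \<times> 'v) set"
  assumes triangulation: "oriented_sphere_triangulation V F"
begin

lemma finite_vertices: "finite V"
  using triangulation unfolding oriented_sphere_triangulation_def by blast

lemma faces_subset: "F \<subseteq> V \<times> V \<times> V"
  using triangulation unfolding oriented_sphere_triangulation_def by (elim conjE)

lemma face_distinct: "(a, b, c) \<in> F \<Longrightarrow> a \<noteq> b \<and> b \<noteq> c \<and> a \<noteq> c"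
  using triangulation unfolding oriented_sphere_triangulation_def by blast

lemma face_rotate: "(a, b, c) \<in> F \<Longrightarrow> (b, c, a) \<in> F"
  using triangulation unfolding oriented_sphere_triangulation_def by blast

lemma face_not_flipped: "(a, b, c) \<in> F \<Longrightarrow> (b, a, c) \<notin> F"
  using triangulation unfolding oriented_sphere_triangulation_def by blast

lemma face_apex_unique: "(a, b, c) \<in> F \<Longrightarrow> (a, b, c') \<in> F \<Longrightarrow> c = c'"
  using triangulation unfolding oriented_sphere_triangulation_def by blast

lemma opposite_face_exists: "(a, b, c) \<in> F \<Longrightarrow> \<exists>c'. (b, a, c') \<in> F"
  using triangulation unfolding oriented_sphere_triangulation_def by blast

lemma finite_tri_edges: "finite (tri_edges F)"
proof (rule finite_subset)
  show "tri_edges F \<subseteq> Pow V" using faces_subset unfolding tri_edges_def by blast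
qed (simp add: finite_vertices)

lemma tri_edgeE:
  assumes "e \<in> tri_edges F"
  obtains x y c c' where "e = {x, y}" "(x, y, c) \<in> F" "(y, x, c') \<in> F"
  using assms opposite_face_exists unfolding tri_edges_def by blast

lemma tri_edge_vertices:
  assumes "{u, w} \<in> tri_edges F"
  shows "u \<in> V" "w \<in> V" "u \<noteq> w"
  using assms faces_subset face_distinct unfolding tri_edges_def by (auto simp: doubleton_eq_iff)

lemma block_inverse_exists:
  assumes tree: "crst V (tri_edges F) B" and "has_odd_cycle V B"
  shows "\<exists>Rinv. is_block_inverse V B Rinv"
proof -
  have "B \<subseteq> tri_edges F" "card V = card B"
    and connected: "\<forall>u\<in>V. \<forall>w\<in>V. (u, w) \<in> {(x, y). {x, y} \<in> B}\<^sup>*"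
    using tree unfolding crst_def by auto
  moreover have "finite B" using \<open>B \<subseteq> tri_edges F\<close> finite_tri_edges finite_subset by blast
  moreover have "\<forall>v\<in>V. z v = 0" if kernel: "\<forall>e\<in>B. (\<Sum>v\<in>V. z v * incidence v e) = 0" for z
  proof
    have alternating: "z u + z w = 0" if "{u, w} \<in> B" for u w
    proof -
      have "u \<in> V" "w \<in> V" "u \<noteq> w"
        using that \<open>B \<subseteq> tri_edges F\<close> tri_edge_vertices[of u w] by auto
      then have "(\<Sum>v\<in>V. z v * incidence v {u, w}) = z u + z w"
        by (rule sum_incidence_doubleton[OF finite_vertices])
      then show ?thesis using kernel that by simp
    qed
    show "z v = 0" if "v \<in> V" for v
      using alternating_on_connected_odd_cycle_graph_eq_0[of B z, OF alternating connected
          \<open>has_odd_cycle V B\<close> that] .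
  qed
  ultimately have "\<exists>h. (\<forall>e\<in>B. \<forall>e'\<in>B. (\<Sum>v\<in>V. h e v * incidence v e') = (if e = e' then 1 else 0))
      \<and> (\<forall>v\<in>V. \<forall>w\<in>V. (\<Sum>e\<in>B. incidence v e * h e w) = (if v = w then 1 else 0))"
    by (intro matrix_inverse_exists[OF finite_vertices]) auto
  then show ?thesis unfolding is_block_inverse_def .
qed

context
  fixes x y c c'
  assumes left_face: "(x, y, c) \<in> F" and right_face: "(y, x, c') \<in> F"
begin

lemma face_rotations: "(y, c, x) \<in> F" "(c, x, y) \<in> F" "(x, c', y) \<in> F" "(c', y, x) \<in> F"
  using face_rotate left_face right_face by blast+

lemma edge_vertices_distinct: "x \<noteq> y" "x \<noteq> c" "y \<noteq> c" "x \<noteq> c'" "y \<noteq> c'" "c \<noteq> c'"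
  using face_distinct face_not_flipped left_face right_face by blast+

lemma face_successor_into_iff: "face_successor F e {x, y} \<longleftrightarrow> e = {c, x} \<or> e = {c', y}"
proof
  assume "face_successor F e {x, y}"
  then obtain a b d where abd: "(a, b, d) \<in> F" "e = {a, b}" "{x, y} = {b, d}"
    unfolding face_successor_def by blast
  then consider "b = x" "d = y" | "b = y" "d = x" by (auto simp: doubleton_eq_iff)
  then show "e = {c, x} \<or> e = {c', y}"
  proof cases
    case 1
    then have "a = c" using abd face_rotate face_apex_unique left_face by blast
    then show ?thesis using abd 1 by auto
  next
    case 2
    then have "a = c'" using abd face_rotate face_apex_unique right_face by blast
    then show ?thesis using abd 2 by auto
  qed
next
  assume "e = {c, x} \<or> e = {c', y}"
  then show "face_successor F e {x, y}"
    unfolding face_successor_def using face_rotations by (auto simp: insert_commute)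
qed

lemma face_successor_from_iff: "face_successor F {x, y} e \<longleftrightarrow> e = {y, c} \<or> e = {x, c'}"
proof
  assume "face_successor F {x, y} e"
  then obtain a b d where abd: "(a, b, d) \<in> F" "{x, y} = {a, b}" "e = {b, d}"
    unfolding face_successor_def by blast
  then consider "a = x" "b = y" | "a = y" "b = x" by (auto simp: doubleton_eq_iff)
  then show "e = {y, c} \<or> e = {x, c'}"
  proof cases
    case 1
    then have "d = c" using abd face_apex_unique left_face by blast
    then show ?thesis using abd 1 by auto
  next
    case 2
    then have "d = c'" using abd face_apex_unique right_face by blast
    then show ?thesis using abd 2 by auto
  qed
next
  assume "e = {y, c} \<or> e = {x, c'}"
  then show "face_successor F {x, y} e"
    unfolding face_successor_def using left_face right_face by (auto simp: insert_commute)
qed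

lemma Emat_column:
  "Emat F e {x, y} = of_bool (e = {y, c}) + of_bool (e = {x, c'})
    - of_bool (e = {c, x}) - of_bool (e = {c', y})"
  unfolding Emat_face_successor face_successor_into_iff face_successor_from_iff
  using edge_vertices_distinct by (auto simp: doubleton_eq_iff)

lemma Emat_row:
  "Emat F {x, y} e = of_bool (e = {c, x}) + of_bool (e = {c', y})
    - of_bool (e = {y, c}) - of_bool (e = {x, c'})"
  unfolding Emat_face_successor face_successor_into_iff face_successor_from_iff
  using edge_vertices_distinct by (auto simp: doubleton_eq_iff)

lemma bordering_edges_in_tri_edges:
  "{y, c} \<in> tri_edges F" "{x, c'} \<in> tri_edges F" "{c, x} \<in> tri_edges F" "{c', y} \<in> tri_edges F"
  unfolding tri_edges_def using face_rotations left_face right_face by blast+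

lemma sum_incidence_bordering_edges:
  "incidence v {y, c} + incidence v {x, c'} - incidence v {c, x} - incidence v {c', y} = 0"
  using edge_vertices_distinct by (auto simp: incidence_def)

end

lemma sum_incidence_Emat_column_eq_0:
  assumes "e' \<in> tri_edges F"
  shows "(\<Sum>e\<in>tri_edges F. incidence v e * Emat F e e') = 0"
proof -
  obtain x y c c' where "e' = {x, y}" "(x, y, c) \<in> F" "(y, x, c') \<in> F"
    using tri_edgeE[OF assms] .
  then show ?thesis
    using sum_incidence_bordering_edges bordering_edges_in_tri_edges
    by (simp add: Emat_column algebra_simps sum.distrib sum_subtractf sum_mult_of_bool_eq_single finite_tri_edges)
qed

lemma sum_incidence_Emat_row_eq_0:
  assumes "e \<in> tri_edges F"
  shows "(\<Sum>e'\<in>tri_edges F. incidence v e' * Emat F e e') = 0"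
proof -
  obtain x y c c' where "e = {x, y}" "(x, y, c) \<in> F" "(y, x, c') \<in> F"
    using tri_edgeE[OF assms] .
  then show ?thesis
    using sum_incidence_bordering_edges bordering_edges_in_tri_edges
    by (simp add: Emat_row algebra_simps sum.distrib sum_subtractf sum_mult_of_bool_eq_single finite_tri_edges)
qed

end

theorem lemma3:
  fixes V :: "'v set" and F :: "('v \<times> 'v \<times> 'v) set" and E0 :: "'v set set" and N :: nat
  assumes "oriented_sphere_triangulation V F"
    and "card V = N + 3"
    and "E0 \<subseteq> tri_edges F"
    and "card E0 = 2 * N"
    and "crst V (tri_edges F) (tri_edges F - E0)"
    and "has_odd_cycle V (tri_edges F - E0)"
  shows "(\<exists>Rinv. is_block_inverse V (tri_edges F - E0) Rinv)
    \<and> (\<forall>Rinv. is_block_inverse V (tri_edges F - E0) Rinv \<longrightarrow>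
         (\<forall>e\<in>tri_edges F. \<forall>e'\<in>tri_edges F.
            Emat F e e' = (\<Sum>f\<in>E0. \<Sum>f'\<in>E0. M0 V E0 Rinv e f * Emat F f f' * M0 V E0 Rinv e' f')))"
proof (intro conjI allI impI ballI)
  interpret sphere_triangulation V F by unfold_locales (fact assms(1))
  show "\<exists>Rinv. is_block_inverse V (tri_edges F - E0) Rinv"
    using block_inverse_exists assms(5,6) .
  fix Rinv e e' assume inverse: "is_block_inverse V (tri_edges F - E0) Rinv"
    and "e \<in> tri_edges F" "e' \<in> tri_edges F"
  note reconstruct = kernel_vector_eq_M0[OF finite_tri_edges finite_vertices assms(3) inverse]
  have "Emat F e e' = (\<Sum>f\<in>E0. M0 V E0 Rinv e f * Emat F f e')"
    using reconstruct[where u = "\<lambda>f. Emat F f e'"] sum_incidence_Emat_column_eq_0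
      \<open>e \<in> tri_edges F\<close> \<open>e' \<in> tri_edges F\<close>
    by blast
  also have "\<dots> = (\<Sum>f\<in>E0. M0 V E0 Rinv e f * (\<Sum>f'\<in>E0. M0 V E0 Rinv e' f' * Emat F f f'))"
    using reconstruct[where u = "\<lambda>f'. Emat F _ f'"] sum_incidence_Emat_row_eq_0
      \<open>e' \<in> tri_edges F\<close> assms(3)
    by (intro sum.cong refl arg_cong[where f = "(*) _"]) blast
  also have "\<dots> = (\<Sum>f\<in>E0. \<Sum>f'\<in>E0. M0 V E0 Rinv e f * Emat F f f' * M0 V E0 Rinv e' f')"
    by (simp add: sum_distrib_left mult.commute mult.left_commute)
  finally show "Emat F e e' = (\<Sum>f\<in>E0. \<Sum>f'\<in>E0. M0 V E0 Rinv e f * Emat F f f' * M0 V E0 Rinv e' f')" .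
qed

end
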